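(* The fertility map $\Phi\colon\mathcal{A}T\to\mathcal{A}M_{-1}$ is a morphism of pre-Lie-Rinehart algebras: its restriction $\Phi\colon\mathcal A\to S(M_0)$ is a unital algebra morphism, and for all $X,Y\in\mathcal{A}T$ and $\mathbf a\in\mathcal A$ one has $\Phi(X\curvearrowright Y)=\Phi(X)\rhd\Phi(Y)$, $\Phi(\mathbf aX)=\Phi(\mathbf a)\odot\Phi(X)$, and $\Phi(\rho(X)\mathbf a)=\rho(\Phi(X))(\Phi(\mathbf a))$.
   Context: Fix a field $\mathbb K$ and a finite set $C$ of decorations. Trees side. An aromatic tree is a finite directed graph $(V,E)$ whose vertices carry decorations $d(v)\in C$, in which every vertex has exactly one outgoing edge except one vertex, the root, which has none; it is considered up to decoration-preserving isomorphism. The connected component of the root is a (rooted) tree; the other components are aromas (connected graphs in which every vertex has exactly one outgoing edge; each contains exactly one directed cycle). Let $T$ be the span of trees, $A_0$ the span of aromas, $\mathcal A=S(A_0)$ the symmetric algebra (multiaromas, product written by juxtaposition), and $\mathcal AT=\mathcal A\otimes T$ the span of aromatic trees $\mathbf a\tau$. The fertility $f(v)$ of a vertex is the number of edges ending at $v$. Grafting: for a tree $\tau_1$ and a tree or aroma $x$, $\tau_1\curvearrowright x$ is the sum over vertices $v$ of $x$ of the graph obtained by adding an edge from the root of $\tau_1$ to $v$; on multiaromas $\tau\curvearrowright(a^1\cdots a^m)=\sum_i a^1\cdots(\tau\curvearrowright a^i)\cdots a^m$; on aromatic trees $(\mathbf a_1\tau_1)\curvearrowright(\mathbf a_2\tau_2)=\mathbf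 a_1\mathbf a_2(\tau_1\curvearrowright\tau_2)+\mathbf a_1(\tau_1\curvearrowright\mathbf a_2)\tau_2$. The anchor is $\rho(\mathbf a_1\tau_1)(\mathbf a)=\mathbf a_1(\tau_1\curvearrowright\mathbf a)$. (With these, $\mathcal AT$ is a pre-Lie-Rinehart algebra over $\mathcal A$.) Multi-index side. $\overline N(C)$ is the polynomial algebra over $\mathbb K$ in variables $x^a_j$, $a\in C$, $j\ge -1$; monomials $x^{\mathbf k}=\prod(x^a_j)^{k^a_j}$ have weight $\sum j k^a_j$; $\partial$ is the derivation with $\partial x^a_j=x^a_{j+1}$; $M_n$ is the span of monomials of weight $n$ ($n=-1,0$; non-constant for $n=0$). $S(V)$ is the symmetric algebra with product $\odot$; $\mathcal AM_{-1}=S(M_0)\otimes M_{-1}$. The product $\rhd$: for monomials $x^{\mathbf k}\in M_{-1}$ and $P\in M_0\cup M_{-1}$, $x^{\mathbf k}\rhd P=x^{\mathbf k}\partial P$; $x^{\mathbf k}\rhd(x^{\kappa^1}\odot\cdots\odot x^{\kappa^m})=\sum_i x^{\kappa^1}\odot\cdots\odot(x^{\mathbf k}\rhd x^{\kappa^i})\odot\cdots\odot x^{\kappa^m}$; $(\mathbf y^1\odot x^{\mathbf k})\rhd\mathbf y=\mathbf y^1\odot(x^{\mathbf k}\rhd\mathbf y)$; $(\mathbf y^1\odot x^{\mathbf k^1})\rhd(\mathbf y^2\odot x^{\mathbf k^2})=\mathbf y^1\odot(x^{\mathbf k^1}\rhd\mathbf y^2)\odot x^{\mathbf k^2}+\mathbf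 y^1\odot\mathbf y^2\odot(x^{\mathbf k^1}\rhd x^{\mathbf k^2})$. The anchor is $\rho(X)(\mathbf y)=X\rhd\mathbf y$. Fertility map: for a tree $t$, $\Phi(t)=\prod_{v}x^{d(v)}_{f(v)-1}\in M_{-1}$; for an aroma $a$, $\Phi(a)=\prod_v x^{d(v)}_{f(v)-1}\in M_0$; $\Phi(a^1\cdots a^nt)=\Phi(a^1)\odot\cdots\odot\Phi(a^n)\odot\Phi(t)$, extended linearly. *)

theory Defs
  imports "HOL-Library.Poly_Mapping" "HOL-Library.Multiset"
begin

text \<open>The span of a set of basis objects of type 'b over a field 'k is
  represented by finitely supported functions ('b \<Rightarrow>0 'k).\<close>

definition smul :: "'k::field \<Rightarrow> ('b \<Rightarrow>\<^sub>0 'k) \<Rightarrow> ('b \<Rightarrow>\<^sub>0 'k)" where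
  "smul c P = Poly_Mapping.map ((*) c) P"

definition lin :: "('a \<Rightarrow> ('b \<Rightarrow>\<^sub>0 'k::field)) \<Rightarrow> ('a \<Rightarrow>\<^sub>0 'k) \<Rightarrow> ('b \<Rightarrow>\<^sub>0 'k)" where
  "lin f X = (\<Sum>x\<in>Poly_Mapping.keys X. smul (Poly_Mapping.lookup X x) (f x))"

definition bilin :: "('a \<Rightarrow> 'b \<Rightarrow> ('c \<Rightarrow>\<^sub>0 'k::field)) \<Rightarrow> ('a \<Rightarrow>\<^sub>0 'k) \<Rightarrow> ('b \<Rightarrow>\<^sub>0 'k) \<Rightarrow> ('c \<Rightarrow>\<^sub>0 'k)" where
  "bilin f X Y = lin (\<lambda>x. lin (\<lambda>y. f x y) Y) X"

definition bas :: "'b \<Rightarrow> ('b \<Rightarrow>\<^sub>0 'k::field)" where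
  "bas b = Poly_Mapping.single b 1"

text \<open>A concrete decorated directed graph in which every vertex has at most one
  outgoing edge: vertices are 0..<nv g, the decoration of v is dec g v, and
  out g v = Some w encodes the (unique) outgoing edge v \<rightarrow> w, None means no
  outgoing edge.  Values at arguments \<ge> nv g are irrelevant junk.\<close>
datatype 'c gr = Gr (nv: nat) (dec: "nat \<Rightarrow> 'c") (out: "nat \<Rightarrow> nat option")

definition gr_iso :: "'c gr \<Rightarrow> 'c gr \<Rightarrow> bool" where
  "gr_iso g h \<longleftrightarrow> nv g = nv h \<and>
     (\<exists>\<sigma>. bij_betw \<sigma> {..<nv g} {..<nv h} \<and>
        (\<forall>v<nv g. dec h (\<sigma> v) = dec g v \<and> out h (\<sigma> v) = map_option \<sigma> (out g v)))"

typedef 'c gcls = "{ {h. gr_iso g h} | g :: 'c gr. True }"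
  by blast

definition cls :: "'c gr \<Rightarrow> 'c gcls" where
  "cls g = Abs_gcls {h. gr_iso g h}"

definition repr :: "'c gcls \<Rightarrow> 'c gr" where
  "repr c = (SOME g. cls g = c)"

definition targets_ok :: "'c gr \<Rightarrow> bool" where
  "targets_ok g \<longleftrightarrow> (\<forall>v<nv g. \<forall>w. out g v = Some w \<longrightarrow> w < nv g)"

definition is_atree :: "'c gr \<Rightarrow> bool" where
  "is_atree g \<longleftrightarrow> targets_ok g \<and> (\<exists>!r. r < nv g \<and> out g r = None)"

text \<open>Multiaroma (finite product of aromas, possibly empty = unit): every vertex
  has exactly one outgoing edge.\<close>
definition is_multiaroma :: "'c gr \<Rightarrow> bool" where
  "is_multiaroma g \<longleftrightarrow> targets_ok g \<and> (\<forall>v<nv g. out g v \<noteq> None)"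

definition ATcls :: "'c gcls set" where
  "ATcls = {c. is_atree (repr c)}"

definition Acls :: "'c gcls set" where
  "Acls = {c. is_multiaroma (repr c)}"

definition root :: "'c gr \<Rightarrow> nat" where
  "root g = (THE r. r < nv g \<and> out g r = None)"

definition edges :: "'c gr \<Rightarrow> (nat \<times> nat) set" where
  "edges g = {(v, w). v < nv g \<and> out g v = Some w}"

definition comp :: "'c gr \<Rightarrow> nat \<Rightarrow> nat set" where
  "comp g v = {w. w < nv g \<and> (v, w) \<in> (edges g \<union> (edges g)\<inverse>)\<^sup>*}"

definition comps :: "'c gr \<Rightarrow> nat set set" where
  "comps g = {comp g v | v. v < nv g}"

text \<open>Disjoint union (the product of multiaromas / action of multiaromas).\<close>
definition du :: "'c gr \<Rightarrow> 'c gr \<Rightarrow> 'c gr" where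
  "du g h = Gr (nv g + nv h)
     (\<lambda>v. if v < nv g then dec g v else dec h (v - nv g))
     (\<lambda>v. if v < nv g then out g v else map_option (\<lambda>w. w + nv g) (out h (v - nv g)))"

definition empty_gr :: "'c gr" where
  "empty_gr = Gr 0 (\<lambda>_. undefined) (\<lambda>_. None)"

definition attach :: "'c gr \<Rightarrow> 'c gr \<Rightarrow> nat \<Rightarrow> 'c gr" where
  "attach g h v = (let u = du g h in
     Gr (nv u) (dec u) ((out u)(root g := Some (nv g + v))))"

text \<open>For an aromatic tree a1 t1 and an aromatic tree or multiaroma x, this is the
  sum over all vertices v of x of the graph obtained by adding an edge from the
  root of t1 to v; it equals a1 a2 (t1 \<curvearrowright> t2) + a1 (t1 \<curvearrowright> a2) t2
  when x = a2 t2, and a1 (t1 \<curvearrowright> x) = \<rho>(a1 t1)(x) when x is a multiaroma.\<close>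
definition graft_gr :: "'c gr \<Rightarrow> 'c gr \<Rightarrow> ('c gcls \<Rightarrow>\<^sub>0 'k::field)" where
  "graft_gr g h = (\<Sum>v<nv h. bas (cls (attach g h v)))"

definition graft :: "('c gcls \<Rightarrow>\<^sub>0 'k::field) \<Rightarrow> ('c gcls \<Rightarrow>\<^sub>0 'k) \<Rightarrow> ('c gcls \<Rightarrow>\<^sub>0 'k)" where
  "graft X Y = bilin (\<lambda>c d. graft_gr (repr c) (repr d)) X Y"

definition anchor :: "('c gcls \<Rightarrow>\<^sub>0 'k::field) \<Rightarrow> ('c gcls \<Rightarrow>\<^sub>0 'k) \<Rightarrow> ('c gcls \<Rightarrow>\<^sub>0 'k)" where
  "anchor X a = bilin (\<lambda>c d. graft_gr (repr c) (repr d)) X a"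

text \<open>Juxtaposition product (multiaroma times multiaroma, multiaroma times
  aromatic tree), bilinearly extended, and the unit (empty multiaroma).\<close>
definition amul :: "('c gcls \<Rightarrow>\<^sub>0 'k::field) \<Rightarrow> ('c gcls \<Rightarrow>\<^sub>0 'k) \<Rightarrow> ('c gcls \<Rightarrow>\<^sub>0 'k)" where
  "amul a X = bilin (\<lambda>c d. bas (cls (du (repr c) (repr d)))) a X"

definition unitA :: "'c gcls \<Rightarrow>\<^sub>0 'k::field" where
  "unitA = bas (cls empty_gr)"

text \<open>Variables of N(C): the pair (a, m) with m :: nat stands for x^a_{m-1}
  (so the index j = m - 1 ranges over j \<ge> -1).  Monomials are finitely
  supported exponent functions; polynomials are finitely supported
  coefficient functions on monomials (with the convolution product of
  Poly_Mapping as polynomial multiplication).\<close>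
type_synonym 'c mon = "('c \<times> nat) \<Rightarrow>\<^sub>0 nat"
type_synonym ('c, 'k) poly = "'c mon \<Rightarrow>\<^sub>0 'k"

text \<open>Symmetric algebra S(M_0): basis = finite multisets of monomials
  (x^{k1} \<odot> ... \<odot> x^{km}); product \<odot> = multiset union.\<close>
type_synonym ('c, 'k) sym = "'c mon multiset \<Rightarrow>\<^sub>0 'k"

text \<open>S(M_0) \<otimes> M_{-1}: basis = pairs (multiset of monomials, monomial).\<close>
type_synonym ('c, 'k) am = "('c mon multiset \<times> 'c mon) \<Rightarrow>\<^sub>0 'k"

text \<open>The derivation \<partial> (x^a_j \<mapsto> x^a_{j+1}) applied to a monomial.\<close>
definition dmon :: "'c mon \<Rightarrow> ('c, 'k::field) poly" where
  "dmon \<kappa> = (\<Sum>(a, m)\<in>Poly_Mapping.keys \<kappa>.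
     Poly_Mapping.single (\<kappa> - Poly_Mapping.single (a, m) 1 + Poly_Mapping.single (a, Suc m) 1)
                         (of_nat (Poly_Mapping.lookup \<kappa> (a, m))))"

text \<open>x^k \<rhd> x^\<kappa> = x^k \<partial> x^\<kappa>.\<close>
definition tri_mm :: "'c mon \<Rightarrow> 'c mon \<Rightarrow> ('c, 'k::field) poly" where
  "tri_mm k \<kappa> = Poly_Mapping.single k 1 * dmon \<kappa>"

definition ins_poly :: "'c mon multiset \<Rightarrow> ('c, 'k::field) poly \<Rightarrow> ('c, 'k) sym" where
  "ins_poly Y P = lin (\<lambda>\<mu>. bas (add_mset \<mu> Y)) P"

text \<open>x^k \<rhd> (x^{\<kappa>1} \<odot> ... \<odot> x^{\<kappa>m}) (sum over positions i, with multiplicity).\<close>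
definition tri_ms :: "'c mon \<Rightarrow> 'c mon multiset \<Rightarrow> ('c, 'k::field) sym" where
  "tri_ms k K = sum_mset (image_mset (\<lambda>\<kappa>. ins_poly (K - {#\<kappa>#}) (tri_mm k \<kappa>)) K)"

definition symmul :: "('c, 'k::field) sym \<Rightarrow> ('c, 'k) sym \<Rightarrow> ('c, 'k) sym" where
  "symmul P Q = bilin (\<lambda>A B. bas (A + B)) P Q"

definition unitS :: "('c, 'k::field) sym" where
  "unitS = bas {#}"

text \<open>Module action \<odot> of S(M_0) on S(M_0) \<otimes> M_{-1}.\<close>
definition symam :: "('c, 'k::field) sym \<Rightarrow> ('c, 'k) am \<Rightarrow> ('c, 'k) am" where
  "symam P X = bilin (\<lambda>A (B, k). bas (A + B, k)) P X"

text \<open>(y1 \<odot> x^{k1}) \<rhd> y = y1 \<odot> (x^{k1} \<rhd> y), bilinearly extended;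
  this is the anchor \<rho>(X)(y) = X \<rhd> y.\<close>
definition tri_as :: "('c, 'k::field) am \<Rightarrow> ('c, 'k) sym \<Rightarrow> ('c, 'k) sym" where
  "tri_as X Y = bilin (\<lambda>(Y1, k1) Y2. symmul (bas Y1) (tri_ms k1 Y2)) X Y"

text \<open>(y1 \<odot> x^{k1}) \<rhd> (y2 \<odot> x^{k2}) =
  y1 \<odot> (x^{k1} \<rhd> y2) \<odot> x^{k2} + y1 \<odot> y2 \<odot> (x^{k1} \<rhd> x^{k2}),
  bilinearly extended.\<close>
definition tri_aa :: "('c, 'k::field) am \<Rightarrow> ('c, 'k) am \<Rightarrow> ('c, 'k) am" where
  "tri_aa X Y = bilin (\<lambda>(Y1, k1) (Y2, k2).
      symam (symmul (bas Y1) (tri_ms k1 Y2)) (bas ({#}, k2))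
    + symam (bas (Y1 + Y2)) (lin (\<lambda>\<mu>. bas ({#}, \<mu>)) (tri_mm k1 k2))) X Y"

definition fert :: "'c gr \<Rightarrow> nat \<Rightarrow> nat" where
  "fert g v = card {w. w < nv g \<and> out g w = Some v}"

text \<open>\<Prod>_{v\<in>S} x^{d(v)}_{f(v)-1} (encoded with index f(v), see above).\<close>
definition vmon :: "'c gr \<Rightarrow> nat set \<Rightarrow> 'c mon" where
  "vmon g S = (\<Sum>v\<in>S. Poly_Mapping.single (dec g v, fert g v) 1)"

text \<open>\<Phi>(a^1 ... a^n t) = \<Phi>(a^1) \<odot> ... \<odot> \<Phi>(a^n) \<odot> \<Phi>(t).\<close>
definition phiAT_gr :: "'c gr \<Rightarrow> 'c mon multiset \<times> 'c mon" where
  "phiAT_gr g = (image_mset (vmon g) (mset_set (comps g - {comp g (root g)})),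
                 vmon g (comp g (root g)))"

text \<open>\<Phi>(a^1 ... a^n) = \<Phi>(a^1) \<odot> ... \<odot> \<Phi>(a^n).\<close>
definition phiA_gr :: "'c gr \<Rightarrow> 'c mon multiset" where
  "phiA_gr g = image_mset (vmon g) (mset_set (comps g))"

definition PhiAT :: "('c gcls \<Rightarrow>\<^sub>0 'k::field) \<Rightarrow> ('c, 'k) am" where
  "PhiAT X = lin (\<lambda>c. bas (phiAT_gr (repr c))) X"

definition PhiA :: "('c gcls \<Rightarrow>\<^sub>0 'k::field) \<Rightarrow> ('c, 'k) sym" where
  "PhiA a = lin (\<lambda>c. bas (phiA_gr (repr c))) a"

end

(*
  Phi records each connected component C of a graph as the monomial x^kappa_C, the product of
  the variables x^(d v)_(f v - 1) over v in C (the root component of an aromatic tree is kept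
  apart).  It is invariant under isomorphism, hence well defined on classes, and it turns
  disjoint union into the product of S(M_0), which gives the multiplicativity statements.

  Grafting the root of a1 t1 onto a vertex u of a component C merges the root component of t1
  with C and raises f u by one, replacing the factor x^(d u)_(f u - 1) by x^(d u)_(f u).  Summed
  over u in C this is x^k1 * partial(x^kappa_C) by the Leibniz rule, where x^k1 is the monomial
  of t1.  Summing over the components of the target gives |>: grafting onto the root component
  of a2 t2 yields the term y1 (.) y2 (.) (x^k1 |> x^k2), grafting onto its aromas the term
  y1 (.) (x^k1 |> y2) (.) x^k2.
*)
theory Submission
  imports Defs
begin

section \<open>Linear and bilinear extension\<close>

lemma lookup_smul [simp]: "Poly_Mapping.lookup (smul c P) x = c * Poly_Mapping.lookup P x"
  unfolding smul_def by (simp add: Poly_Mapping.map.rep_eq when_def)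

lemma smul_0 [simp]: "smul 0 P = 0"
  by (rule poly_mapping_eqI) simp

lemma smul_1 [simp]: "smul 1 P = P"
  by (rule poly_mapping_eqI) simp

lemma smul_add_left: "smul (a + b) P = smul a P + smul b P"
  by (rule poly_mapping_eqI) (simp add: lookup_add algebra_simps)

lemma smul_smul: "smul a (smul b P) = smul (a * b) P"
  by (rule poly_mapping_eqI) (simp add: algebra_simps)

lemma smul_sum: "smul c (sum f S) = (\<Sum>x\<in>S. smul c (f x))"
  by (rule poly_mapping_eqI) (simp add: lookup_sum sum_distrib_left)

lemma lin_superset:
  assumes "finite S" and "Poly_Mapping.keys X \<subseteq> S"
  shows "lin f X = (\<Sum>x\<in>S. smul (Poly_Mapping.lookup X x) (f x))"
  unfolding lin_def by (rule sum.mono_neutral_left) (auto simp: assms in_keys_iff)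

lemma lin_add: "lin f (X + Y) = lin f X + lin f Y"
proof -
  let ?S = "Poly_Mapping.keys X \<union> Poly_Mapping.keys Y"
  have "lin f (X + Y) = (\<Sum>x\<in>?S. smul (Poly_Mapping.lookup (X + Y) x) (f x))"
    by (rule lin_superset) (auto simp: keys_add)
  also have "\<dots> = (\<Sum>x\<in>?S. smul (Poly_Mapping.lookup X x) (f x))
      + (\<Sum>x\<in>?S. smul (Poly_Mapping.lookup Y x) (f x))"
    by (simp add: lookup_add smul_add_left sum.distrib)
  also have "\<dots> = lin f X + lin f Y"
    by (subst (1 2) lin_superset[symmetric]) auto
  finally show ?thesis .
qed

lemma lin_zero [simp]: "lin f 0 = 0"
  by (simp add: lin_def)

lemma lin_sum: "lin f (sum g S) = (\<Sum>x\<in>S. lin f (g x))"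
  by (induction S rule: infinite_finite_induct) (auto simp: lin_add)

lemma lin_smul: "lin f (smul c X) = smul c (lin f X)"
proof -
  have "lin f (smul c X) = (\<Sum>x\<in>Poly_Mapping.keys X. smul (Poly_Mapping.lookup (smul c X) x) (f x))"
    by (rule lin_superset) (auto simp: in_keys_iff)
  then show ?thesis by (simp add: lin_def smul_sum smul_smul)
qed

lemma lin_bas [simp]: "lin f (bas b) = f b"
  by (simp add: lin_def bas_def)

lemma lin_single: "lin f (Poly_Mapping.single b c) = smul c (f b)"
  by (simp add: lin_def)

lemma lin_lin: "lin g (lin f X) = lin (\<lambda>x. lin g (f x)) X"
  unfolding lin_def[of f] by (simp add: lin_sum lin_smul lin_def[of "\<lambda>x. lin g (f x)"])

lemma lin_swap: "lin (\<lambda>x. lin (\<lambda>y. G x y) B) A = lin (\<lambda>y. lin (\<lambda>x. G x y) A) B"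
  unfolding lin_def
  by (simp add: smul_sum smul_smul mult.commute sum.swap[of _ "Poly_Mapping.keys A"])

lemma bilin_bas [simp]: "bilin f (bas x) (bas y) = f x y"
  by (simp add: bilin_def)

lemma bilin_bas_left: "bilin F (bas x) Y = lin (F x) Y"
  by (simp add: bilin_def)

lemma bilin_bas_right: "bilin F X (bas y) = lin (\<lambda>x. F x y) X"
  by (simp add: bilin_def)

lemma bilin_lin_lin: "bilin F (lin p X) (lin q Y) = bilin (\<lambda>x y. bilin F (p x) (q y)) X Y"
  unfolding bilin_def by (simp add: lin_lin lin_swap[of _ Y])

lemma bilin_cong:
  "(\<And>x y. x \<in> Poly_Mapping.keys X \<Longrightarrow> y \<in> Poly_Mapping.keys Y \<Longrightarrow> f x y = g x y)
    \<Longrightarrow> bilin f X Y = bilin g X Y"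
  unfolding bilin_def lin_def by simp

lemma lin_bilin: "lin h (bilin f X Y) = bilin (\<lambda>x y. lin h (f x y)) X Y"
  unfolding bilin_def by (simp add: lin_lin)

lemma lin_bilin_eq_bilin_lin:
  assumes "\<And>x y. x \<in> Poly_Mapping.keys X \<Longrightarrow> y \<in> Poly_Mapping.keys Y \<Longrightarrow>
    lin h (F x y) = bilin G (bas (p x)) (bas (q y))"
  shows "lin h (bilin F X Y) = bilin G (lin (\<lambda>x. bas (p x)) X) (lin (\<lambda>y. bas (q y)) Y)"
  unfolding lin_bilin bilin_lin_lin by (rule bilin_cong) (rule assms)

section \<open>Connected components\<close>

lemma rtrancl_map_prod: "(x, y) \<in> R\<^sup>* \<Longrightarrow> (f x, f y) \<in> (map_prod f f ` R)\<^sup>*"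
proof (induction rule: rtrancl_induct)
  case (step y z)
  then have "(f y, f z) \<in> map_prod f f ` R" by force
  with step.IH show ?case by (rule rtrancl_into_rtrancl)
qed simp

lemma rtrancl_closed: "(x, y) \<in> R\<^sup>* \<Longrightarrow> x \<in> D \<Longrightarrow> Field R \<subseteq> D \<Longrightarrow> y \<in> D"
  by (induction rule: rtrancl_induct) (auto simp: Field_def)

lemma rtrancl_map_prod_inj_on:
  assumes "(f a, b) \<in> (map_prod f f ` R)\<^sup>*" and "inj_on f D" and "Field R \<subseteq> D" and "a \<in> D"
  shows "\<exists>b'. b = f b' \<and> (a, b') \<in> R\<^sup>*"
  using assms(1)
proof (induction rule: rtrancl_induct)
  case (step y z)
  then obtain b' where b': "y = f b'" "(a, b') \<in> R\<^sup>*" by auto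
  from step.hyps(2) obtain p q where pq: "(p, q) \<in> R" "y = f p" "z = f q" by auto
  have "b' \<in> D" using rtrancl_closed[OF b'(2) assms(4,3)] .
  moreover have "p \<in> D" using pq(1) assms(3) by (auto simp: Field_def)
  ultimately have "p = b'" using assms(2) b'(1) pq(2) by (auto dest: inj_onD)
  then have "(a, q) \<in> R\<^sup>*" using pq(1) b'(2) by (meson rtrancl_into_rtrancl)
  then show ?case using pq(3) by blast
qed auto

lemma rtrancl_Un_disjoint_Field:
  assumes "(x, y) \<in> (R \<union> S)\<^sup>*" and "x \<in> D" and "Field R \<subseteq> D" and "Field S \<inter> D = {}"
  shows "(x, y) \<in> R\<^sup>*"
  using assms(1)
proof (rule rtrancl_Un_separatorE, intro allI impI)
  fix u w assume "(x, u) \<in> R\<^sup>*" and "(u, w) \<in> S"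
  then have "u \<in> D" and "u \<in> Field S" using rtrancl_closed[OF _ assms(2,3)] by (auto intro: FieldI1)
  with assms(4) show "u = w" by blast
qed

lemma rtrancl_insert_sym_edge:
  assumes "sym R"
  shows "(x, y) \<in> (R \<union> {(a, b), (b, a)})\<^sup>* \<longleftrightarrow>
    (x, y) \<in> R\<^sup>* \<or> ((x, a) \<in> R\<^sup>* \<and> (b, y) \<in> R\<^sup>*) \<or> ((x, b) \<in> R\<^sup>* \<and> (a, y) \<in> R\<^sup>*)"
proof
  have sw: "(u, w) \<in> R\<^sup>* \<Longrightarrow> (w, u) \<in> R\<^sup>*" for u w
    using sym_rtrancl[OF assms] by (auto dest: symD)
  assume "(x, y) \<in> (R \<union> {(a, b), (b, a)})\<^sup>*"
  then show "(x, y) \<in> R\<^sup>* \<or> ((x, a) \<in> R\<^sup>* \<and> (b, y) \<in> R\<^sup>*) \<or> ((x, b) \<in> R\<^sup>* \<and> (a, y) \<in> R\<^sup>*)"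
  proof (induction rule: rtrancl_induct)
    case (step y z)
    from step.hyps(2) consider "(y, z) \<in> R" | "y = a" "z = b" | "y = b" "z = a" by auto
    then show ?case
    proof cases
      case 1
      then show ?thesis using step.IH by (meson r_into_rtrancl rtrancl_trans)
    qed (use step.IH sw in blast)+
  qed simp
next
  have "R\<^sup>* \<subseteq> (R \<union> {(a, b), (b, a)})\<^sup>*" by (rule rtrancl_mono) auto
  moreover have "(a, b) \<in> (R \<union> {(a, b), (b, a)})\<^sup>*" "(b, a) \<in> (R \<union> {(a, b), (b, a)})\<^sup>*" by auto
  ultimately show "(x, y) \<in> R\<^sup>* \<or> ((x, a) \<in> R\<^sup>* \<and> (b, y) \<in> R\<^sup>*) \<or> ((x, b) \<in> R\<^sup>* \<and> (a, y) \<in> R\<^sup>*)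
    \<Longrightarrow> (x, y) \<in> (R \<union> {(a, b), (b, a)})\<^sup>*"
    by (meson rtrancl_trans subsetD)
qed

definition uedges :: "'c gr \<Rightarrow> (nat \<times> nat) set" where
  "uedges g = edges g \<union> (edges g)\<inverse>"

lemma comp_uedges: "comp g v = {w. w < nv g \<and> (v, w) \<in> (uedges g)\<^sup>*}"
  by (simp add: comp_def uedges_def)

lemma sym_uedges: "sym (uedges g)"
  by (auto simp: uedges_def sym_def)

lemma rtrancl_uedges_sym: "(x, y) \<in> (uedges g)\<^sup>* \<Longrightarrow> (y, x) \<in> (uedges g)\<^sup>*"
  using sym_rtrancl[OF sym_uedges[of g]] by (auto dest: symD)

lemma Field_uedges: "targets_ok g \<Longrightarrow> Field (uedges g) \<subseteq> {..<nv g}"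
  by (auto simp: uedges_def edges_def targets_ok_def Field_def)

lemma mem_comp_self: "v < nv g \<Longrightarrow> v \<in> comp g v"
  by (simp add: comp_uedges)

lemma comp_subset: "comp g v \<subseteq> {..<nv g}"
  by (auto simp: comp_uedges)

lemma finite_comp [simp]: "finite (comp g v)"
  using comp_subset finite_subset by blast

lemma comp_eq_if_mem: "w \<in> comp g v \<Longrightarrow> comp g w = comp g v"
  unfolding comp_uedges using rtrancl_uedges_sym[of _ _ g] rtrancl_trans[of _ _ "uedges g"] by blast

lemma comps_eq_image: "comps g = comp g ` {..<nv g}"
  by (auto simp: comps_def)

lemma finite_comps [simp]: "finite (comps g)"
  by (simp add: comps_eq_image)

lemma comp_in_comps: "v < nv g \<Longrightarrow> comp g v \<in> comps g"
  by (auto simp: comps_def)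

lemma comp_eq_if_mem_comps: "C \<in> comps g \<Longrightarrow> v \<in> C \<Longrightarrow> comp g v = C"
  unfolding comps_def using comp_eq_if_mem by blast

lemma comps_subset: "C \<in> comps g \<Longrightarrow> C \<subseteq> {..<nv g}"
  using comp_subset by (auto simp: comps_def)

lemma finite_comps_elem: "C \<in> comps g \<Longrightarrow> finite C"
  using comps_subset finite_subset by blast

lemma comps_nonempty: "C \<in> comps g \<Longrightarrow> C \<noteq> {}"
  using mem_comp_self by (auto simp: comps_def)

lemma Union_comps: "\<Union>(comps g) = {..<nv g}"
  using comp_subset mem_comp_self by (fastforce simp: comps_def)

lemma sum_lessThan_comps: "(\<Sum>v<nv g. F v) = (\<Sum>C\<in>comps g. \<Sum>v\<in>C. F v)"
proof -
  have "(\<Sum>v<nv g. F v) = sum F (\<Union>(comps g))" by (simp add: Union_comps)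
  also have "\<dots> = (\<Sum>C\<in>comps g. \<Sum>v\<in>C. F v)"
    by (rule sum.Union_disjoint[unfolded o_def])
      (use finite_comps_elem comp_eq_if_mem_comps in blast)+
  finally show ?thesis .
qed

section \<open>Aromatic trees and invariance under isomorphism\<close>

lemma
  assumes "is_atree g"
  shows root_less_nv: "root g < nv g" and out_root: "out g (root g) = None"
  using theI'[of "\<lambda>r. r < nv g \<and> out g r = None"] assms unfolding is_atree_def root_def by blast+

lemma eq_root:
  assumes "is_atree g" and "x < nv g" and "out g x = None"
  shows "x = root g"
proof -
  from assms(1) have "\<exists>!r. r < nv g \<and> out g r = None" by (simp add: is_atree_def)
  then show ?thesis using assms(2,3) root_less_nv[OF assms(1)] out_root[OF assms(1)] by blast
qed

lemma is_atree_targets_ok: "is_atree g \<Longrightarrow> targets_ok g"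
  by (simp add: is_atree_def)

lemma is_multiaroma_targets_ok: "is_multiaroma g \<Longrightarrow> targets_ok g"
  by (simp add: is_multiaroma_def)

lemma is_atreeI:
  assumes "targets_ok g" and "r < nv g" and "out g r = None"
    and "\<And>x. x < nv g \<Longrightarrow> out g x = None \<Longrightarrow> x = r"
  shows "is_atree g" and "root g = r"
proof -
  have "\<exists>!r. r < nv g \<and> out g r = None" by (rule ex1I[of _ r]) (use assms(2-4) in blast)+
  then show "is_atree g" using assms(1) by (simp add: is_atree_def)
  show "root g = r" unfolding root_def by (rule the_equality) (use assms(2-4) in blast)+
qed

locale gr_isomorphism =
  fixes \<sigma> :: "nat \<Rightarrow> nat" and g h :: "'c gr"
  assumes nv_eq: "nv h = nv g"
    and bij: "bij_betw \<sigma> {..<nv g} {..<nv g}"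
    and dec_eq: "v < nv g \<Longrightarrow> dec h (\<sigma> v) = dec g v"
    and out_eq: "v < nv g \<Longrightarrow> out h (\<sigma> v) = map_option \<sigma> (out g v)"
begin

lemma inj: "inj_on \<sigma> {..<nv g}"
  using bij bij_betw_imp_inj_on by blast

lemma less_nv: "v < nv g \<Longrightarrow> \<sigma> v < nv g"
  using bij bij_betwE by blast

lemma surj: "w < nv g \<Longrightarrow> \<exists>v<nv g. w = \<sigma> v"
  using bij_betw_imp_surj_on[OF bij] by (metis imageE lessThan_iff)

lemma edges_eq: "edges h = map_prod \<sigma> \<sigma> ` edges g"
proof (intro set_eqI iffI)
  fix e assume "e \<in> edges h"
  then obtain v' w where e: "e = (v', w)" "v' < nv g" "out h v' = Some w"
    by (auto simp: edges_def nv_eq)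
  obtain v where v: "v < nv g" "v' = \<sigma> v" using surj e(2) by blast
  then obtain w0 where "out g v = Some w0" "w = \<sigma> w0" using e out_eq by auto
  then show "e \<in> map_prod \<sigma> \<sigma> ` edges g" using e v by (auto simp: edges_def)
next
  fix e assume "e \<in> map_prod \<sigma> \<sigma> ` edges g"
  then show "e \<in> edges h" using out_eq less_nv by (auto simp: edges_def nv_eq)
qed

lemma uedges_eq: "uedges h = map_prod \<sigma> \<sigma> ` uedges g"
  unfolding uedges_def edges_eq by auto

lemma targets_ok:
  assumes "targets_ok g"
  shows "targets_ok h"
  unfolding targets_ok_def
proof (intro allI impI)
  fix v' w assume "v' < nv h" and out_v': "out h v' = Some w"
  then obtain v where v: "v < nv g" "v' = \<sigma> v" using surj nv_eq by auto
  with out_v' obtain w0 where "out g v = Some w0" "w = \<sigma> w0" using out_eq by auto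
  then show "w < nv h" using assms v less_nv nv_eq unfolding targets_ok_def by auto
qed

lemma comp_eq:
  assumes "targets_ok g" and v: "v < nv g"
  shows "comp h (\<sigma> v) = \<sigma> ` comp g v"
proof (intro set_eqI iffI)
  fix w assume "w \<in> comp h (\<sigma> v)"
  then have "(\<sigma> v, w) \<in> (map_prod \<sigma> \<sigma> ` uedges g)\<^sup>*"
    by (auto simp: comp_uedges uedges_eq)
  then obtain w' where w': "w = \<sigma> w'" "(v, w') \<in> (uedges g)\<^sup>*"
    using rtrancl_map_prod_inj_on[OF _ inj Field_uedges[OF assms(1)]] v by blast
  then have "w' < nv g" using rtrancl_closed[OF w'(2)] Field_uedges[OF assms(1)] v by auto
  then show "w \<in> \<sigma> ` comp g v" using w' by (auto simp: comp_uedges)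
next
  fix w assume "w \<in> \<sigma> ` comp g v"
  then obtain w' where "w = \<sigma> w'" "w' < nv g" "(v, w') \<in> (uedges g)\<^sup>*" by (auto simp: comp_uedges)
  then show "w \<in> comp h (\<sigma> v)"
    using rtrancl_map_prod[of v w' "uedges g" \<sigma>] less_nv by (auto simp: comp_uedges nv_eq uedges_eq)
qed

lemma comps_eq:
  assumes "targets_ok g"
  shows "comps h = image \<sigma> ` comps g"
proof -
  have "comps h = comp h ` \<sigma> ` {..<nv g}"
    by (simp add: comps_eq_image nv_eq bij_betw_imp_surj_on[OF bij])
  also have "\<dots> = image \<sigma> ` comp g ` {..<nv g}"
    unfolding image_image using comp_eq[OF assms] by simp
  finally show ?thesis by (simp add: comps_eq_image)
qed

lemma inj_on_image_comps: "inj_on (image \<sigma>) (comps g)"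
  using inj_on_image[of \<sigma> "comps g"] inj by (simp add: Union_comps)

lemma fert_eq:
  assumes t: "targets_ok g" and v: "v < nv g"
  shows "fert h (\<sigma> v) = fert g v"
proof -
  have "{w. w < nv h \<and> out h w = Some (\<sigma> v)} = \<sigma> ` {w. w < nv g \<and> out g w = Some v}"
  proof (intro set_eqI iffI)
    fix w' assume "w' \<in> {w. w < nv h \<and> out h w = Some (\<sigma> v)}"
    then have w': "w' < nv g" "out h w' = Some (\<sigma> v)" by (auto simp: nv_eq)
    obtain w where w: "w < nv g" "w' = \<sigma> w" using surj w'(1) by blast
    with w' out_eq obtain x where x: "out g w = Some x" "\<sigma> x = \<sigma> v" by fastforce
    have "x < nv g" using t w(1) x(1) unfolding targets_ok_def by blast
    then have "x = v" using x(2) v inj by (auto dest: inj_onD)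
    then show "w' \<in> \<sigma> ` {w. w < nv g \<and> out g w = Some v}" using w x by auto
  qed (use out_eq less_nv nv_eq in auto)
  moreover have "inj_on \<sigma> {w. w < nv g \<and> out g w = Some v}"
    using inj by (rule inj_on_subset) auto
  ultimately show ?thesis unfolding fert_def by (simp add: card_image)
qed

lemma vmon_eq:
  assumes "targets_ok g" and S: "S \<subseteq> {..<nv g}"
  shows "vmon h (\<sigma> ` S) = vmon g S"
proof -
  have "inj_on \<sigma> S" using inj S by (rule inj_on_subset)
  then show ?thesis unfolding vmon_def
    using S by (simp add: sum.reindex dec_eq fert_eq[OF assms(1)] subset_eq)
qed

lemma phiA_gr_eq:
  assumes "targets_ok g"
  shows "phiA_gr h = phiA_gr g"
proof -
  have "phiA_gr h = image_mset (vmon h \<circ> image \<sigma>) (mset_set (comps g))"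
    unfolding phiA_gr_def comps_eq[OF assms]
    by (simp add: image_mset_mset_set[OF inj_on_image_comps, symmetric] image_mset.compositionality)
  also have "\<dots> = phiA_gr g"
    unfolding phiA_gr_def by (rule image_mset_cong) (simp add: vmon_eq[OF assms] comps_subset)
  finally show ?thesis .
qed

lemma
  assumes "is_atree g"
  shows is_atree: "is_atree h" and root_eq: "root h = \<sigma> (root g)"
proof -
  have unique: "x = \<sigma> (root g)" if "x < nv h" and "out h x = None" for x
  proof -
    have "x < nv g" using that(1) nv_eq by simp
    then obtain v where v: "v < nv g" "x = \<sigma> v" using surj by blast
    then have "out g v = None" using that(2) out_eq by simp
    then show ?thesis using v eq_root[OF assms v(1)] by simp
  qed
  have "\<sigma> (root g) < nv h" and "out h (\<sigma> (root g)) = None"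
    using less_nv out_eq nv_eq root_less_nv[OF assms] out_root[OF assms] by simp_all
  note atree_rules = is_atreeI[OF targets_ok[OF is_atree_targets_ok[OF assms]] this]
  show "is_atree h" by (rule atree_rules(1)) (rule unique)
  show "root h = \<sigma> (root g)" by (rule atree_rules(2)) (rule unique)
qed

lemma phiAT_gr_eq:
  assumes a: "is_atree g"
  shows "phiAT_gr h = phiAT_gr g"
proof -
  have t: "targets_ok g" using a by (rule is_atree_targets_ok)
  have root_comp: "comp h (root h) = \<sigma> ` comp g (root g)"
    using root_eq[OF a] comp_eq[OF t root_less_nv[OF a]] by simp
  have "comps h - {comp h (root h)} = image \<sigma> ` (comps g - {comp g (root g)})"
    unfolding comps_eq[OF t] root_comp
    using inj_on_image_set_diff[OF inj_on_image_comps] comp_in_comps[OF root_less_nv[OF a]] by simp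
  moreover have "inj_on (image \<sigma>) (comps g - {comp g (root g)})"
    using inj_on_image_comps by (rule inj_on_subset) auto
  ultimately have "fst (phiAT_gr h)
      = image_mset (vmon h \<circ> image \<sigma>) (mset_set (comps g - {comp g (root g)}))"
    unfolding phiAT_gr_def
    by (simp add: image_mset_mset_set[symmetric] image_mset.compositionality)
  also have "\<dots> = fst (phiAT_gr g)"
    unfolding phiAT_gr_def fst_conv by (rule image_mset_cong) (simp add: vmon_eq[OF t] comps_subset)
  moreover have "snd (phiAT_gr h) = snd (phiAT_gr g)"
    unfolding phiAT_gr_def snd_conv root_comp using vmon_eq[OF t comp_subset] .
  ultimately show ?thesis by (simp add: prod_eq_iff)
qed

end

lemma gr_iso_refl: "gr_iso g g"
  unfolding gr_iso_def by (intro conjI exI[of _ id]) (auto simp: option.map_id)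

lemma gr_isomorphism_repr_cls: "\<exists>\<sigma>. gr_isomorphism \<sigma> g (repr (cls g))"
proof -
  have "\<exists>g'. cls g' = cls g" by blast
  then have "cls (repr (cls g)) = cls g" unfolding repr_def by (rule someI_ex)
  then have "{h. gr_iso (repr (cls g)) h} = {h. gr_iso g h}"
    unfolding cls_def by (subst (asm) Abs_gcls_inject) auto
  then have "gr_iso g (repr (cls g))" using gr_iso_refl[of "repr (cls g)"] by blast
  then show ?thesis by (auto simp: gr_iso_def gr_isomorphism_def)
qed

lemma phiA_gr_repr_cls: "targets_ok g \<Longrightarrow> phiA_gr (repr (cls g)) = phiA_gr g"
  using gr_isomorphism_repr_cls[of g] gr_isomorphism.phiA_gr_eq by metis

lemma phiAT_gr_repr_cls: "is_atree g \<Longrightarrow> phiAT_gr (repr (cls g)) = phiAT_gr g"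
  using gr_isomorphism_repr_cls[of g] gr_isomorphism.phiAT_gr_eq by metis

section \<open>Disjoint union\<close>

lemma nv_du [simp]: "nv (du g h) = nv g + nv h"
  by (simp add: du_def)

lemma dec_du: "dec (du g h) v = (if v < nv g then dec g v else dec h (v - nv g))"
  by (simp add: du_def)

lemma out_du:
  "out (du g h) v = (if v < nv g then out g v else map_option (\<lambda>w. w + nv g) (out h (v - nv g)))"
  by (simp add: du_def)

lemma edges_du: "edges (du g h) = edges g \<union> map_prod (\<lambda>x. x + nv g) (\<lambda>x. x + nv g) ` edges h"
proof (intro set_eqI iffI)
  fix e assume "e \<in> edges (du g h)"
  then obtain x y where e: "e = (x, y)" "x < nv g + nv h" "out (du g h) x = Some y"
    by (auto simp: edges_def)
  show "e \<in> edges g \<union> map_prod (\<lambda>x. x + nv g) (\<lambda>x. x + nv g) ` edges h"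
  proof (cases "x < nv g")
    case False
    then obtain y' where y': "out h (x - nv g) = Some y'" "y = y' + nv g"
      using e by (auto simp: out_du)
    then have "(x - nv g, y') \<in> edges h" using e False by (simp add: edges_def)
    moreover have "e = map_prod (\<lambda>x. x + nv g) (\<lambda>x. x + nv g) (x - nv g, y')"
      using e y' False by simp
    ultimately show ?thesis by blast
  qed (use e in \<open>simp add: out_du edges_def\<close>)
qed (auto simp: edges_def out_du)

lemma uedges_du: "uedges (du g h) = uedges g \<union> map_prod (\<lambda>x. x + nv g) (\<lambda>x. x + nv g) ` uedges h"
  unfolding uedges_def edges_du converse_Un by (auto simp: image_Un converse_def)

lemma targets_ok_du:
  assumes "targets_ok g" and "targets_ok h"
  shows "targets_ok (du g h)"
  unfolding targets_ok_def
proof (intro allI impI)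
  fix v w assume v: "v < nv (du g h)" and out_v: "out (du g h) v = Some w"
  show "w < nv (du g h)"
  proof (cases "v < nv g")
    case True
    then have "w < nv g" using assms(1) out_v by (simp add: out_du targets_ok_def)
    then show ?thesis by simp
  next
    case False
    then obtain w' where "out h (v - nv g) = Some w'" "w = w' + nv g"
      using out_v by (auto simp: out_du)
    moreover have "v - nv g < nv h" using v False by simp
    ultimately show ?thesis using assms(2) by (simp add: targets_ok_def)
  qed
qed

lemma inj_on_image_shift: "inj_on (image (\<lambda>y. y + (k::nat))) X"
  by (rule inj_on_subset[OF inj_on_image[of _ UNIV]]) (auto simp: inj_on_def)

lemma image_mset_mset_set_Un_shift:
  assumes "finite A" and "finite B" and "A \<inter> image (\<lambda>y. y + k) ` B = {}"
  shows "image_mset f (mset_set (A \<union> image (\<lambda>y. y + (k::nat)) ` B)) =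
    image_mset f (mset_set A) + image_mset (f \<circ> image (\<lambda>y. y + k)) (mset_set B)"
  using assms
  by (simp add: mset_set_Union image_mset.compositionality
      image_mset_mset_set[OF inj_on_image_shift, symmetric])

context
  fixes g h :: "'c gr"
  assumes targets_g: "targets_ok g" and targets_h: "targets_ok h"
begin

lemma comp_du_left:
  assumes x: "x < nv g"
  shows "comp (du g h) x = comp g x"
proof -
  have "(x, y) \<in> (uedges (du g h))\<^sup>* \<longleftrightarrow> (x, y) \<in> (uedges g)\<^sup>*" for y
  proof
    assume "(x, y) \<in> (uedges (du g h))\<^sup>*"
    then show "(x, y) \<in> (uedges g)\<^sup>*"
      unfolding uedges_du
      by (rule rtrancl_Un_disjoint_Field[of _ _ _ _ "{..<nv g}"])
        (use x Field_uedges[OF targets_g] in \<open>auto simp: Field_def\<close>)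
  qed (auto simp: uedges_du intro: rtrancl_mono[THEN subsetD, rotated])
  moreover have "(x, y) \<in> (uedges g)\<^sup>* \<Longrightarrow> y < nv g" for y
    using rtrancl_closed[of x y _ "{..<nv g}"] Field_uedges[OF targets_g] x by auto
  ultimately show ?thesis unfolding comp_uedges by (auto intro: trans_less_add1)
qed

lemma comp_du_right:
  assumes x: "x < nv h"
  shows "comp (du g h) (x + nv g) = (\<lambda>y. y + nv g) ` comp h x"
proof -
  let ?shift = "map_prod (\<lambda>x. x + nv g) (\<lambda>x. x + nv g) ` uedges h"
  have "(x + nv g, y) \<in> (uedges (du g h))\<^sup>* \<longleftrightarrow> (\<exists>y'. y = y' + nv g \<and> (x, y') \<in> (uedges h)\<^sup>*)" for y
  proof
    assume "(x + nv g, y) \<in> (uedges (du g h))\<^sup>*"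
    then have "(x + nv g, y) \<in> (?shift \<union> uedges g)\<^sup>*" by (simp add: uedges_du Un_commute)
    then have "(x + nv g, y) \<in> ?shift\<^sup>*"
      by (rule rtrancl_Un_disjoint_Field[of _ _ _ _ "{nv g..}"])
        (use Field_uedges[OF targets_g] in \<open>auto simp: Field_def\<close>)
    then show "\<exists>y'. y = y' + nv g \<and> (x, y') \<in> (uedges h)\<^sup>*"
      by (rule rtrancl_map_prod_inj_on[where D = UNIV]) (simp_all add: inj_on_def)
  next
    assume "\<exists>y'. y = y' + nv g \<and> (x, y') \<in> (uedges h)\<^sup>*"
    then have "(x + nv g, y) \<in> ?shift\<^sup>*" using rtrancl_map_prod by fastforce
    then show "(x + nv g, y) \<in> (uedges (du g h))\<^sup>*"
      unfolding uedges_du by (rule rtrancl_mono[THEN subsetD, rotated]) blast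
  qed
  moreover have "(x, y) \<in> (uedges h)\<^sup>* \<Longrightarrow> y < nv h" for y
    using rtrancl_closed[of x y _ "{..<nv h}"] Field_uedges[OF targets_h] x by auto
  ultimately show ?thesis unfolding comp_uedges by fastforce
qed

lemma comps_du: "comps (du g h) = comps g \<union> image (\<lambda>y. y + nv g) ` comps h"
proof -
  have "(\<lambda>y. y + nv g) ` {..<nv h} = {nv g..<nv g + nv h}"
    by (simp add: lessThan_atLeast0 add.commute)
  then have "{..<nv g + nv h} = {..<nv g} \<union> (\<lambda>y. y + nv g) ` {..<nv h}"
    by (simp add: ivl_disj_un)
  moreover have "comp (du g h) ` {..<nv g} = comp g ` {..<nv g}"
    by (rule image_cong) (simp_all add: comp_du_left)
  moreover have "comp (du g h) ` (\<lambda>y. y + nv g) ` {..<nv h} = image (\<lambda>y. y + nv g) ` comp h ` {..<nv h}"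
    unfolding image_image by (rule image_cong) (simp_all add: comp_du_right)
  ultimately show ?thesis unfolding comps_eq_image nv_du by (simp add: image_Un)
qed

lemma comps_du_disjoint: "comps g \<inter> image (\<lambda>y. y + nv g) ` X = {}"
  using comps_nonempty comps_subset by fastforce

lemma fert_du_left: "w < nv g \<Longrightarrow> fert (du g h) w = fert g w"
proof -
  assume w: "w < nv g"
  have "{u. u < nv (du g h) \<and> out (du g h) u = Some w} = {u. u < nv g \<and> out g u = Some w}"
    using w by (auto simp: out_du)
  then show ?thesis by (simp add: fert_def)
qed

lemma fert_du_right: "w < nv h \<Longrightarrow> fert (du g h) (w + nv g) = fert h w"
proof -
  assume w: "w < nv h"
  have "{u. u < nv (du g h) \<and> out (du g h) u = Some (w + nv g)} =
        (\<lambda>u. u + nv g) ` {u. u < nv h \<and> out h u = Some w}"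
  proof (intro set_eqI iffI)
    fix u assume u: "u \<in> {u. u < nv (du g h) \<and> out (du g h) u = Some (w + nv g)}"
    have "\<not> u < nv g"
      using u targets_g by (auto simp: out_du targets_ok_def)
    then show "u \<in> (\<lambda>u. u + nv g) ` {u. u < nv h \<and> out h u = Some w}"
      using u by (intro image_eqI[of _ _ "u - nv g"]) (auto simp: out_du)
  qed (auto simp: out_du)
  then show ?thesis by (simp add: fert_def card_image)
qed

lemma vmon_du_left: "C \<subseteq> {..<nv g} \<Longrightarrow> vmon (du g h) C = vmon g C"
  unfolding vmon_def by (intro sum.cong) (auto simp: dec_du fert_du_left)

lemma vmon_du_right: "C \<subseteq> {..<nv h} \<Longrightarrow> vmon (du g h) ((\<lambda>y. y + nv g) ` C) = vmon h C"
  unfolding vmon_def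
  by (subst sum.reindex) (auto simp: inj_on_def dec_du fert_du_right intro!: sum.cong)

lemma image_mset_vmon_du_left:
  "S \<subseteq> comps g \<Longrightarrow> image_mset (vmon (du g h)) (mset_set S) = image_mset (vmon g) (mset_set S)"
  by (intro image_mset_cong) (metis comps_subset vmon_du_left elem_mset_set finite_comps
      finite_subset subsetD)

lemma image_mset_vmon_du_right:
  "S \<subseteq> comps h \<Longrightarrow>
    image_mset (vmon (du g h) \<circ> image (\<lambda>y. y + nv g)) (mset_set S) = image_mset (vmon h) (mset_set S)"
  by (intro image_mset_cong) (metis comps_subset vmon_du_right elem_mset_set finite_comps
      finite_subset subsetD o_apply)

lemma phiA_gr_du: "phiA_gr (du g h) = phiA_gr g + phiA_gr h"
  unfolding phiA_gr_def comps_du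
  by (simp add: image_mset_mset_set_Un_shift comps_du_disjoint image_mset_vmon_du_left
      image_mset_vmon_du_right)

end

lemma
  assumes "is_multiaroma g" and "is_atree h"
  shows is_atree_du: "is_atree (du g h)" and root_du: "root (du g h) = root h + nv g"
proof -
  have unique: "x = root h + nv g" if "x < nv (du g h)" and "out (du g h) x = None" for x
  proof -
    have "\<not> x < nv g" using that assms(1) by (auto simp: out_du is_multiaroma_def)
    then have "x - nv g < nv h" and "out h (x - nv g) = None" using that by (auto simp: out_du)
    with \<open>\<not> x < nv g\<close> show ?thesis using eq_root[OF assms(2)] by fastforce
  qed
  have "root h + nv g < nv (du g h)" and "out (du g h) (root h + nv g) = None"
    using root_less_nv[OF assms(2)] out_root[OF assms(2)] by (simp_all add: out_du)
  note atree_rules = is_atreeI[OF targets_ok_du this]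
  show "is_atree (du g h)"
    by (rule atree_rules(1)) (use assms is_multiaroma_targets_ok is_atree_targets_ok unique in blast)+
  show "root (du g h) = root h + nv g"
    by (rule atree_rules(2)) (use assms is_multiaroma_targets_ok is_atree_targets_ok unique in blast)+
qed

lemma phiAT_gr_du:
  assumes "is_multiaroma g" and "is_atree h"
  shows "phiAT_gr (du g h) = (phiA_gr g + fst (phiAT_gr h), snd (phiAT_gr h))"
proof -
  have tg: "targets_ok g" and th: "targets_ok h"
    using assms by (simp_all add: is_multiaroma_targets_ok is_atree_targets_ok)
  let ?R = "comp h (root h)"
  have root_comp: "comp (du g h) (root (du g h)) = (\<lambda>y. y + nv g) ` ?R"
    using root_du[OF assms] comp_du_right[OF tg th root_less_nv[OF assms(2)]] by simp
  have "comps (du g h) - {comp (du g h) (root (du g h))}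
      = comps g \<union> image (\<lambda>y. y + nv g) ` (comps h - {?R})"
    unfolding comps_du[OF tg th] root_comp
    using comps_du_disjoint[OF tg th] inj_on_image_shift[of "nv g" "comps h"]
      comp_in_comps[OF root_less_nv[OF assms(2)]]
    by (auto dest: inj_onD)
  then have "fst (phiAT_gr (du g h)) = phiA_gr g + fst (phiAT_gr h)"
    unfolding phiAT_gr_def phiA_gr_def fst_conv
    by (simp add: image_mset_mset_set_Un_shift comps_du_disjoint[OF tg th]
        image_mset_vmon_du_left[OF tg th] image_mset_vmon_du_right[OF tg th])
  moreover have "snd (phiAT_gr (du g h)) = snd (phiAT_gr h)"
    unfolding phiAT_gr_def snd_conv root_comp using vmon_du_right[OF tg th comp_subset] .
  ultimately show ?thesis by (simp add: prod_eq_iff)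
qed

section \<open>Grafting onto a vertex\<close>

definition vmon_grafted :: "'c gr \<Rightarrow> nat set \<Rightarrow> nat \<Rightarrow> 'c mon" where
  "vmon_grafted h C u = vmon h (C - {u}) + Poly_Mapping.single (dec h u, Suc (fert h u)) 1"

definition merged_comp :: "'c gr \<Rightarrow> 'c gr \<Rightarrow> nat \<Rightarrow> nat set" where
  "merged_comp g h v = comp g (root g) \<union> (\<lambda>y. y + nv g) ` comp h v"

lemma nv_attach [simp]: "nv (attach g h v) = nv g + nv h"
  by (simp add: attach_def Let_def)

lemma dec_attach: "dec (attach g h v) = dec (du g h)"
  by (simp add: attach_def Let_def)

lemma out_attach: "out (attach g h v) = (out (du g h))(root g := Some (nv g + v))"
  by (simp add: attach_def Let_def)

context
  fixes g h :: "'c gr" and v :: nat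
  assumes atree_g: "is_atree g" and targets_h: "targets_ok h" and v: "v < nv h"
begin

lemma edges_attach: "edges (attach g h v) = insert (root g, nv g + v) (edges (du g h))"
proof -
  have "out (du g h) (root g) = None" using root_less_nv[OF atree_g] out_root[OF atree_g]
    by (simp add: out_du)
  then show ?thesis using root_less_nv[OF atree_g]
    by (auto simp: edges_def out_attach split: if_splits)
qed

lemma rtrancl_uedges_attach:
  "(x, y) \<in> (uedges (attach g h v))\<^sup>* \<longleftrightarrow> (x, y) \<in> (uedges (du g h))\<^sup>*
    \<or> ((x, root g) \<in> (uedges (du g h))\<^sup>* \<and> (nv g + v, y) \<in> (uedges (du g h))\<^sup>*)
    \<or> ((x, nv g + v) \<in> (uedges (du g h))\<^sup>* \<and> (root g, y) \<in> (uedges (du g h))\<^sup>*)"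
proof -
  have "uedges (attach g h v) = uedges (du g h) \<union> {(root g, nv g + v), (nv g + v, root g)}"
    unfolding uedges_def edges_attach by auto
  then show ?thesis using rtrancl_insert_sym_edge[OF sym_uedges] by simp
qed

lemma merged_comp_du: "merged_comp g h v = comp (du g h) (root g) \<union> comp (du g h) (nv g + v)"
  using comp_du_left[OF is_atree_targets_ok[OF atree_g] targets_h root_less_nv[OF atree_g]]
    comp_du_right[OF is_atree_targets_ok[OF atree_g] targets_h v]
  by (simp add: merged_comp_def add.commute)

lemma comp_attach:
  assumes x: "x < nv g + nv h"
  shows "comp (attach g h v) x = (if x \<in> merged_comp g h v then merged_comp g h v else comp (du g h) x)"
proof -
  let ?R = "(uedges (du g h))\<^sup>*"
  have sym: "(a, b) \<in> ?R \<Longrightarrow> (b, a) \<in> ?R" for a b by (rule rtrancl_uedges_sym)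
  have trans: "(a, b) \<in> ?R \<Longrightarrow> (b, c) \<in> ?R \<Longrightarrow> (a, c) \<in> ?R" for a b c by (rule rtrancl_trans)
  have comp_attach: "comp (attach g h v) x = {y. y < nv g + nv h \<and> ((x, y) \<in> ?R
      \<or> ((x, root g) \<in> ?R \<and> (nv g + v, y) \<in> ?R) \<or> ((x, nv g + v) \<in> ?R \<and> (root g, y) \<in> ?R))}"
    unfolding comp_uedges rtrancl_uedges_attach by simp
  have comp_du: "comp (du g h) z = {y. y < nv g + nv h \<and> (z, y) \<in> ?R}" for z
    unfolding comp_uedges by simp
  show ?thesis
  proof (cases "x \<in> merged_comp g h v")
    case True
    then have "(x, root g) \<in> ?R \<or> (x, nv g + v) \<in> ?R"
      unfolding merged_comp_du comp_du using sym by blast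
    then have "comp (attach g h v) x = comp (du g h) (root g) \<union> comp (du g h) (nv g + v)"
      unfolding comp_attach comp_du using sym trans by blast
    then show ?thesis using True by (simp add: merged_comp_du)
  next
    case False
    then have "(x, root g) \<notin> ?R" "(x, nv g + v) \<notin> ?R"
      using x sym unfolding merged_comp_du comp_du by blast+
    then show ?thesis using False unfolding comp_attach comp_du by auto
  qed
qed

lemma merged_comp_notin:
  "merged_comp g h v \<notin> (comps g - {comp g (root g)}) \<union> image (\<lambda>y. y + nv g) ` X"
proof -
  have "root g \<in> merged_comp g h v" and "nv g + v \<in> merged_comp g h v"
    using mem_comp_self[OF root_less_nv[OF atree_g]] mem_comp_self[OF v]
    by (auto simp: merged_comp_def add.commute)
  then show ?thesis using comps_subset[of "merged_comp g h v" g] root_less_nv[OF atree_g] by auto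
qed

lemma comps_attach_eq_insert_merged_comp:
  "comps (attach g h v) = insert (merged_comp g h v)
    (comps (du g h) - {comp (du g h) (root g), comp (du g h) (nv g + v)})"
proof (intro set_eqI iffI)
  fix C assume "C \<in> comps (attach g h v)"
  then obtain x where x: "x < nv g + nv h" "C = comp (attach g h v) x" by (auto simp: comps_def)
  then show "C \<in> insert (merged_comp g h v)
      (comps (du g h) - {comp (du g h) (root g), comp (du g h) (nv g + v)})"
    using comp_attach[OF x(1)] comp_in_comps[of x "du g h"] mem_comp_self[of x "du g h"]
    by (auto simp: merged_comp_du)
next
  fix C assume C: "C \<in> insert (merged_comp g h v)
      (comps (du g h) - {comp (du g h) (root g), comp (du g h) (nv g + v)})"
  show "C \<in> comps (attach g h v)"
  proof (cases "C = merged_comp g h v")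
    case True
    have r: "root g < nv g + nv h" using root_less_nv[OF atree_g] by simp
    have "root g \<in> merged_comp g h v"
      using mem_comp_self[OF root_less_nv[OF atree_g]] by (simp add: merged_comp_def)
    then show ?thesis using True r comp_attach[OF r] comp_in_comps[of "root g" "attach g h v"] by simp
  next
    case False
    then obtain x where x: "x < nv g + nv h" "C = comp (du g h) x"
      and "C \<noteq> comp (du g h) (root g)" "C \<noteq> comp (du g h) (nv g + v)"
      using C by (auto simp: comps_def)
    then have "x \<notin> merged_comp g h v" unfolding merged_comp_du using comp_eq_if_mem by blast
    then show ?thesis
      using x comp_attach[OF x(1)] comp_in_comps[of x "attach g h v"] by simp
  qed
qed

lemma comps_attach:
  "comps (attach g h v) = insert (merged_comp g h v)
    ((comps g - {comp g (root g)}) \<union> image (\<lambda>y. y + nv g) ` (comps h - {comp h v}))"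
proof -
  have targets_g: "targets_ok g" using atree_g by (rule is_atree_targets_ok)
  let ?shift = "image (\<lambda>y. y + nv g)"
  have "?shift ` (comps h - {comp h v}) = ?shift ` comps h - {?shift (comp h v)}"
    using inj_on_image_set_diff[OF inj_on_image_shift[of "nv g" "comps h"], of "comps h" "{comp h v}"]
      comp_in_comps[OF v] by simp
  moreover have "?shift (comp h v) \<notin> comps g" and "comp g (root g) \<notin> ?shift ` comps h"
    using comps_du_disjoint[OF targets_g targets_h] comp_in_comps[OF v]
      comp_in_comps[OF root_less_nv[OF atree_g]] by blast+
  ultimately show ?thesis
    using comp_du_left[OF targets_g targets_h root_less_nv[OF atree_g]]
      comp_du_right[OF targets_g targets_h v]
    unfolding comps_attach_eq_insert_merged_comp comps_du[OF targets_g targets_h]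
    by (auto simp: add.commute)
qed
lemma fert_attach:
  "w < nv g + nv h \<Longrightarrow> fert (attach g h v) w = fert (du g h) w + (if w = nv g + v then 1 else 0)"
proof -
  let ?S = "{u. u < nv g + nv h \<and> out (du g h) u = Some w}"
  have "finite ?S" by simp
  have "out (du g h) (root g) = None" using root_less_nv[OF atree_g] out_root[OF atree_g]
    by (simp add: out_du)
  then have "root g \<notin> ?S"
    and "{u. u < nv (attach g h v) \<and> out (attach g h v) u = Some w}
      = ?S \<union> (if w = nv g + v then {root g} else {})"
    using root_less_nv[OF atree_g] by (auto simp: out_attach)
  with \<open>finite ?S\<close> show ?thesis by (cases "w = nv g + v") (simp_all add: fert_def)
qed

lemma vmon_attach:
  "S \<subseteq> {..<nv g + nv h} \<Longrightarrow> nv g + v \<notin> S \<Longrightarrow> vmon (attach g h v) S = vmon (du g h) S"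
  unfolding vmon_def by (intro sum.cong refl) (auto simp: dec_attach fert_attach)

lemma vmon_attach_merged_comp:
  "vmon (attach g h v) (merged_comp g h v) = vmon g (comp g (root g)) + vmon_grafted h (comp h v) v"
proof -
  have targets_g: "targets_ok g" using atree_g by (rule is_atree_targets_ok)
  let ?R = "comp g (root g)" and ?C = "comp h v"
  have R: "?R \<subseteq> {..<nv g}" by (rule comp_subset)
  have "vmon (attach g h v) (merged_comp g h v)
      = vmon (attach g h v) ?R + vmon (attach g h v) ((\<lambda>y. y + nv g) ` ?C)"
    unfolding vmon_def merged_comp_def using R by (intro sum.union_disjoint) auto
  also have "vmon (attach g h v) ?R = vmon g ?R"
    using R vmon_attach[of ?R] vmon_du_left[OF targets_g targets_h R] by fastforce
  also have "vmon (attach g h v) ((\<lambda>y. y + nv g) ` ?C)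
      = (\<Sum>u\<in>?C. Poly_Mapping.single (dec h u, fert h u + (if u = v then 1 else 0)) 1)"
    unfolding vmon_def
    using comp_subset[of h v] fert_attach fert_du_right[OF targets_g targets_h]
    by (subst sum.reindex) (auto simp: inj_on_def dec_attach dec_du add.commute intro!: sum.cong)
  also have "\<dots> = Poly_Mapping.single (dec h v, fert h v + 1) 1
      + (\<Sum>u\<in>?C - {v}. Poly_Mapping.single (dec h u, fert h u + (if u = v then 1 else 0)) 1)"
    using mem_comp_self[OF v] by (simp add: sum.remove)
  also have "(\<Sum>u\<in>?C - {v}. Poly_Mapping.single (dec h u, fert h u + (if u = v then 1 else 0)) 1)
      = vmon h (?C - {v})"
    unfolding vmon_def by (rule sum.cong) auto
  also have "Poly_Mapping.single (dec h v, fert h v + 1) 1 + vmon h (?C - {v}) = vmon_grafted h ?C v"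
    by (simp add: vmon_grafted_def add.commute)
  finally show ?thesis .
qed

lemma image_mset_vmon_attach:
  assumes X: "X \<subseteq> comps h - {comp h v}"
  shows "image_mset (vmon (attach g h v))
      (mset_set ((comps g - {comp g (root g)}) \<union> image (\<lambda>y. y + nv g) ` X))
    = fst (phiAT_gr g) + image_mset (vmon h) (mset_set X)"
proof -
  have targets_g: "targets_ok g" using atree_g by (rule is_atree_targets_ok)
  have "finite X" using X finite_subset[OF _ finite_comps] by blast
  then have "image_mset (vmon (attach g h v))
      (mset_set ((comps g - {comp g (root g)}) \<union> image (\<lambda>y. y + nv g) ` X))
    = image_mset (vmon (attach g h v)) (mset_set (comps g - {comp g (root g)}))
      + image_mset (vmon (attach g h v) \<circ> image (\<lambda>y. y + nv g)) (mset_set X)"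
    using comps_du_disjoint[OF targets_g targets_h] by (intro image_mset_mset_set_Un_shift) auto
  also have "image_mset (vmon (attach g h v)) (mset_set (comps g - {comp g (root g)}))
      = image_mset (vmon (du g h)) (mset_set (comps g - {comp g (root g)}))"
    by (intro image_mset_cong vmon_attach) (auto dest!: comps_subset)
  also have "\<dots> = fst (phiAT_gr g)"
    unfolding phiAT_gr_def fst_conv by (rule image_mset_vmon_du_left[OF targets_g targets_h]) blast
  also have "image_mset (vmon (attach g h v) \<circ> image (\<lambda>y. y + nv g)) (mset_set X)
      = image_mset (vmon (du g h) \<circ> image (\<lambda>y. y + nv g)) (mset_set X)"
  proof (intro image_mset_cong)
    fix C assume "C \<in># mset_set X"
    then have "C \<in> comps h" and "v \<notin> C" using X \<open>finite X\<close> comp_eq_if_mem_comps by auto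
    then show "(vmon (attach g h v) \<circ> image (\<lambda>y. y + nv g)) C
        = (vmon (du g h) \<circ> image (\<lambda>y. y + nv g)) C"
      by (auto intro!: vmon_attach dest!: comps_subset)
  qed
  also have "\<dots> = image_mset (vmon h) (mset_set X)"
    by (rule image_mset_vmon_du_right[OF targets_g targets_h]) (use X in blast)
  finally show ?thesis .
qed

lemma phiA_gr_attach:
  "phiA_gr (attach g h v) = fst (phiAT_gr g) + image_mset (vmon h) (mset_set (comps h - {comp h v}))
    + {# snd (phiAT_gr g) + vmon_grafted h (comp h v) v #}"
  unfolding phiA_gr_def comps_attach
  using merged_comp_notin image_mset_vmon_attach[OF subset_refl]
  by (simp add: vmon_attach_merged_comp phiAT_gr_def)

lemma targets_ok_attach: "targets_ok (attach g h v)"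
  using targets_ok_du[OF is_atree_targets_ok[OF atree_g] targets_h] v
  by (auto simp: targets_ok_def out_attach)

end

context
  fixes g h :: "'c gr" and v :: nat
  assumes atree_g: "is_atree g" and atree_h: "is_atree h" and v: "v < nv h"
begin

lemma
  shows is_atree_attach: "is_atree (attach g h v)"
    and root_attach: "root (attach g h v) = root h + nv g"
proof -
  have unique: "x = root h + nv g" if "x < nv (attach g h v)" and "out (attach g h v) x = None" for x
  proof -
    have "x \<noteq> root g" using that by (auto simp: out_attach)
    then have out_x: "out (du g h) x = None" using that by (simp add: out_attach)
    have "\<not> x < nv g"
      using out_x eq_root[OF atree_g, of x] \<open>x \<noteq> root g\<close> by (auto simp: out_du)
    then have "x - nv g < nv h" and "out h (x - nv g) = None" using that out_x by (auto simp: out_du)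
    with \<open>\<not> x < nv g\<close> show ?thesis using eq_root[OF atree_h] by fastforce
  qed
  have "root h + nv g < nv (attach g h v)" and "out (attach g h v) (root h + nv g) = None"
    using root_less_nv[OF atree_h] root_less_nv[OF atree_g] out_root[OF atree_h]
    by (simp_all add: out_attach out_du)
  note atree_rules = is_atreeI[OF targets_ok_attach[OF atree_g is_atree_targets_ok[OF atree_h] v] this]
  show "is_atree (attach g h v)" by (rule atree_rules(1)) (rule unique)
  show "root (attach g h v) = root h + nv g" by (rule atree_rules(2)) (rule unique)
qed

lemma root_comp_attach:
  "comp (attach g h v) (root (attach g h v)) =
    (if comp h v = comp h (root h) then merged_comp g h v else (\<lambda>y. y + nv g) ` comp h (root h))"
proof -
  have targets_h: "targets_ok h" using atree_h by (rule is_atree_targets_ok)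
  have r: "root h < nv h" using atree_h by (rule root_less_nv)
  have "root h + nv g \<in> merged_comp g h v \<longleftrightarrow> root h \<in> comp h v"
    using comp_subset[of g "root g"] by (auto simp: merged_comp_def)
  also have "\<dots> \<longleftrightarrow> comp h v = comp h (root h)"
    using comp_eq_if_mem mem_comp_self[OF r] by metis
  finally show ?thesis
    unfolding root_attach using comp_attach[OF atree_g targets_h v, of "root h + nv g"] r
      comp_du_right[OF is_atree_targets_ok[OF atree_g] targets_h r] by simp
qed

lemma phiAT_gr_attach_root_comp:
  assumes "comp h v = comp h (root h)"
  shows "phiAT_gr (attach g h v) =
    (fst (phiAT_gr g) + fst (phiAT_gr h), snd (phiAT_gr g) + vmon_grafted h (comp h (root h)) v)"
proof -
  have targets_h: "targets_ok h" using atree_h by (rule is_atree_targets_ok)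
  have "comps (attach g h v) - {merged_comp g h v}
      = (comps g - {comp g (root g)}) \<union> image (\<lambda>y. y + nv g) ` (comps h - {comp h v})"
    unfolding comps_attach[OF atree_g targets_h v] using merged_comp_notin[OF atree_g targets_h v]
    by blast
  then show ?thesis
    unfolding phiAT_gr_def root_comp_attach
    using assms image_mset_vmon_attach[OF atree_g targets_h v subset_refl]
    by (simp add: vmon_attach_merged_comp[OF atree_g targets_h v] phiAT_gr_def)
qed

lemma comps_attach_remove_shifted_root_comp:
  assumes "comp h v \<noteq> comp h (root h)"
  shows "comps (attach g h v) - {(\<lambda>y. y + nv g) ` comp h (root h)} = insert (merged_comp g h v)
    ((comps g - {comp g (root g)}) \<union> image (\<lambda>y. y + nv g) ` (comps h - {comp h (root h)} - {comp h v}))"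
proof -
  have targets_g: "targets_ok g" using atree_g by (rule is_atree_targets_ok)
  have targets_h: "targets_ok h" using atree_h by (rule is_atree_targets_ok)
  let ?shift = "image (\<lambda>y. y + nv g)" and ?R = "comp h (root h)"
  have R: "?R \<in> comps h" using comp_in_comps[OF root_less_nv[OF atree_h]] .
  have "?shift ?R \<noteq> merged_comp g h v"
    using merged_comp_notin[OF atree_g targets_h v, of "{?R}"] by auto
  then have "comps (attach g h v) - {?shift ?R} = insert (merged_comp g h v)
      ((comps g - {comp g (root g)}) \<union> ?shift ` (comps h - {comp h v}) - {?shift ?R})"
    unfolding comps_attach[OF atree_g targets_h v] by (simp add: insert_Diff_if)
  also have "(comps g - {comp g (root g)}) \<union> ?shift ` (comps h - {comp h v}) - {?shift ?R}
      = (comps g - {comp g (root g)}) \<union> (?shift ` (comps h - {comp h v}) - {?shift ?R})"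
    using comps_du_disjoint[OF targets_g targets_h] R by blast
  also have "?shift ` (comps h - {comp h v}) - {?shift ?R} = ?shift ` (comps h - {comp h v} - {?R})"
    using inj_on_image_set_diff[OF inj_on_image_shift[of "nv g" "comps h"],
        of "comps h - {comp h v}" "{?R}"] R by auto
  also have "comps h - {comp h v} - {?R} = comps h - {?R} - {comp h v}" by blast
  finally show ?thesis .
qed

lemma phiAT_gr_attach_other_comp:
  assumes "comp h v \<noteq> comp h (root h)"
  shows "phiAT_gr (attach g h v) =
    (fst (phiAT_gr g) + image_mset (vmon h) (mset_set (comps h - {comp h (root h)} - {comp h v}))
      + {# snd (phiAT_gr g) + vmon_grafted h (comp h v) v #}, snd (phiAT_gr h))"
proof -
  have targets_g: "targets_ok g" using atree_g by (rule is_atree_targets_ok)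
  have targets_h: "targets_ok h" using atree_h by (rule is_atree_targets_ok)
  let ?shift = "image (\<lambda>y. y + nv g)" and ?R = "comp h (root h)"
  have root_comp: "comp (attach g h v) (root (attach g h v)) = ?shift ?R"
    using root_comp_attach assms by simp
  have "comps h - {?R} - {comp h v} \<subseteq> comps h - {comp h v}" by blast
  then have fst_eq: "fst (phiAT_gr (attach g h v)) = add_mset (vmon (attach g h v) (merged_comp g h v))
      (fst (phiAT_gr g) + image_mset (vmon h) (mset_set (comps h - {?R} - {comp h v})))"
    unfolding phiAT_gr_def fst_conv root_comp comps_attach_remove_shifted_root_comp[OF assms]
    using merged_comp_notin[OF atree_g targets_h v] image_mset_vmon_attach[OF atree_g targets_h v]
    by (simp add: phiAT_gr_def)
  have "nv g + v \<notin> ?shift ?R"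
    using assms comp_eq_if_mem_comps[OF comp_in_comps[OF root_less_nv[OF atree_h]], of v] by auto
  moreover have "?shift ?R \<subseteq> {..<nv g + nv h}" using comp_subset[of h "root h"] by auto
  ultimately have "vmon (attach g h v) (?shift ?R) = vmon h ?R"
    using vmon_attach[OF atree_g targets_h v] vmon_du_right[OF targets_g targets_h comp_subset]
    by simp
  then have "snd (phiAT_gr (attach g h v)) = snd (phiAT_gr h)"
    using root_comp by (simp add: phiAT_gr_def)
  with fst_eq show ?thesis
    by (simp add: prod_eq_iff vmon_attach_merged_comp[OF atree_g targets_h v] phiAT_gr_def[of g])
qed

end

section \<open>The derivation on vertex monomials\<close>

lemma sum_single_const: "(\<Sum>u\<in>S. Poly_Mapping.single x (1::'a::semiring_1)) = Poly_Mapping.single x (of_nat (card S))"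
  by (induction S rule: infinite_finite_induct) (simp_all add: single_add[symmetric] add.commute)

lemma lookup_sum_single:
  "finite C \<Longrightarrow> Poly_Mapping.lookup (\<Sum>u\<in>C. Poly_Mapping.single (key u) (1::nat)) p = card {u\<in>C. key u = p}"
  by (simp add: lookup_sum lookup_single when_def sum.If_cases) (simp add: Int_def)

lemma keys_sum_single:
  assumes "finite C"
  shows "Poly_Mapping.keys (\<Sum>u\<in>C. Poly_Mapping.single (key u) (1::nat)) = key ` C"
proof -
  have "p \<in> Poly_Mapping.keys (\<Sum>u\<in>C. Poly_Mapping.single (key u) (1::nat)) \<longleftrightarrow> p \<in> key ` C" for p
  proof -
    have "p \<in> Poly_Mapping.keys (\<Sum>u\<in>C. Poly_Mapping.single (key u) (1::nat))
        \<longleftrightarrow> {u\<in>C. key u = p} \<noteq> {}"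
      unfolding in_keys_iff lookup_sum_single[OF assms] using assms by simp
    also have "\<dots> \<longleftrightarrow> p \<in> key ` C" by blast
    finally show ?thesis .
  qed
  then show ?thesis by blast
qed

lemma dmon_sum_single:
  fixes key :: "'b \<Rightarrow> 'c \<times> nat"
  assumes C: "finite C"
  defines "\<kappa> \<equiv> \<Sum>u\<in>C. Poly_Mapping.single (key u) 1"
  shows "(dmon \<kappa> :: ('c, 'k::field) poly) = (\<Sum>u\<in>C. Poly_Mapping.single
      (\<kappa> - Poly_Mapping.single (key u) 1 + Poly_Mapping.single (fst (key u), Suc (snd (key u))) 1) 1)"
proof -
  let ?F = "\<lambda>p. \<kappa> - Poly_Mapping.single p 1 + Poly_Mapping.single (fst p, Suc (snd p)) 1"
  have "dmon \<kappa> = (\<Sum>p\<in>key ` C. Poly_Mapping.single (?F p) (of_nat (Poly_Mapping.lookup \<kappa> p)) :: ('c, 'k) poly)"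
    unfolding dmon_def keys_sum_single[OF C, of key, folded \<kappa>_def]
    by (intro sum.cong refl) (simp add: case_prod_beta)
  also have "\<dots> = (\<Sum>p\<in>key ` C. \<Sum>u\<in>{u\<in>C. key u = p}. Poly_Mapping.single (?F p) 1)"
    by (intro sum.cong refl) (simp only: sum_single_const \<kappa>_def lookup_sum_single[OF C])
  also have "\<dots> = (\<Sum>p\<in>key ` C. \<Sum>u\<in>{u\<in>C. key u = p}. Poly_Mapping.single (?F (key u)) 1)"
    by (intro sum.cong refl) simp
  also have "\<dots> = (\<Sum>u\<in>C. Poly_Mapping.single (?F (key u)) 1)"
    by (rule sum.image_gen[OF C, symmetric])
  finally show ?thesis .
qed

lemma dmon_vmon:
  assumes "finite C"
  shows "(dmon (vmon h C) :: ('c, 'k::field) poly) = (\<Sum>u\<in>C. Poly_Mapping.single (vmon_grafted h C u) 1)"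
proof -
  have remove: "vmon h C - Poly_Mapping.single (dec h u, fert h u) 1 = vmon h (C - {u})" if "u \<in> C" for u
    unfolding vmon_def using assms that by (subst sum.remove[of C u]) simp_all
  have "(dmon (vmon h C) :: ('c, 'k) poly) = (\<Sum>u\<in>C. Poly_Mapping.single (vmon h C
      - Poly_Mapping.single (dec h u, fert h u) 1 + Poly_Mapping.single (dec h u, Suc (fert h u)) 1) 1)"
    using dmon_sum_single[OF assms, of "\<lambda>u. (dec h u, fert h u)"] by (simp add: vmon_def)
  also have "\<dots> = (\<Sum>u\<in>C. Poly_Mapping.single (vmon_grafted h C u) 1)"
    by (intro sum.cong refl) (simp only: vmon_grafted_def remove)
  finally show ?thesis .
qed

lemma tri_mm_vmon:
  "finite C \<Longrightarrow>
    (tri_mm k (vmon h C) :: ('c, 'k::field) poly) = (\<Sum>u\<in>C. Poly_Mapping.single (k + vmon_grafted h C u) 1)"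
  unfolding tri_mm_def by (simp add: dmon_vmon sum_distrib_left mult_single)

lemma tri_ms_image_mset_vmon:
  assumes S: "finite S" "\<And>C. C \<in> S \<Longrightarrow> finite C"
  shows "(tri_ms k (image_mset (vmon h) (mset_set S)) :: ('c, 'k::field) sym) =
    (\<Sum>C\<in>S. \<Sum>u\<in>C. bas (add_mset (k + vmon_grafted h C u) (image_mset (vmon h) (mset_set (S - {C})))))"
proof -
  let ?K = "image_mset (vmon h) (mset_set S)"
  have "(tri_ms k ?K :: ('c, 'k) sym) = (\<Sum>C\<in>S. ins_poly (?K - {#vmon h C#}) (tri_mm k (vmon h C)))"
    unfolding tri_ms_def sum_unfold_sum_mset image_mset.compositionality o_def ..
  also have "\<dots> = (\<Sum>C\<in>S. \<Sum>u\<in>C. bas (add_mset (k + vmon_grafted h C u) (image_mset (vmon h) (mset_set (S - {C})))))"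
  proof (rule sum.cong[OF refl])
    fix C assume C: "C \<in> S"
    then have "?K - {#vmon h C#} = image_mset (vmon h) (mset_set (S - {C}))"
      using S by (simp add: mset_set_Diff image_mset_Diff)
    then show "ins_poly (?K - {#vmon h C#}) (tri_mm k (vmon h C)) =
      (\<Sum>u\<in>C. bas (add_mset (k + vmon_grafted h C u) (image_mset (vmon h) (mset_set (S - {C})))) :: ('c, 'k) sym)"
      by (simp add: tri_mm_vmon[OF S(2)[OF C]] ins_poly_def lin_sum lin_single)
  qed
  finally show ?thesis .
qed

section \<open>The fertility map\<close>

lemma tri_as_phiA_gr:
  assumes atree_g: "is_atree g" and targets_h: "targets_ok h"
  shows "(tri_as (bas (phiAT_gr g)) (bas (phiA_gr h)) :: ('c, 'k::field) sym)
    = (\<Sum>v<nv h. bas (phiA_gr (attach g h v)))"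
proof -
  obtain Y k where phi_g: "phiAT_gr g = (Y, k)" by fastforce
  have "(tri_as (bas (phiAT_gr g)) (bas (phiA_gr h)) :: ('c, 'k) sym) = (\<Sum>C\<in>comps h. \<Sum>v\<in>C.
      bas (Y + add_mset (k + vmon_grafted h C v) (image_mset (vmon h) (mset_set (comps h - {C})))))"
    unfolding phi_g tri_as_def bilin_bas symmul_def bilin_bas_left phiA_gr_def
    by (simp add: tri_ms_image_mset_vmon finite_comps_elem lin_sum)
  also have "\<dots> = (\<Sum>C\<in>comps h. \<Sum>v\<in>C. bas (phiA_gr (attach g h v)))"
  proof (intro sum.cong refl)
    fix C v assume C: "C \<in> comps h" and "v \<in> C"
    then have "v < nv h" and "comp h v = C" using comps_subset comp_eq_if_mem_comps by blast+
    then show "bas (Y + add_mset (k + vmon_grafted h C v) (image_mset (vmon h) (mset_set (comps h - {C}))))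
        = bas (phiA_gr (attach g h v))"
      using phiA_gr_attach[OF atree_g targets_h] phi_g by simp
  qed
  also have "\<dots> = (\<Sum>v<nv h. bas (phiA_gr (attach g h v)))" by (rule sum_lessThan_comps[symmetric])
  finally show ?thesis .
qed

context
  fixes g h :: "'c gr"
  assumes atree_g: "is_atree g" and atree_h: "is_atree h"
begin

lemma sum_phiAT_gr_attach_aromas:
  "(\<Sum>C\<in>comps h - {comp h (root h)}. \<Sum>v\<in>C. bas (phiAT_gr (attach g h v)))
    = (symam (symmul (bas (fst (phiAT_gr g))) (tri_ms (snd (phiAT_gr g)) (fst (phiAT_gr h))))
        (bas ({#}, snd (phiAT_gr h))) :: ('c, 'k::field) am)"
proof -
  obtain Y k where phi_g: "phiAT_gr g = (Y, k)" by fastforce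
  let ?S = "comps h - {comp h (root h)}"
  have phi_h: "phiAT_gr h = (image_mset (vmon h) (mset_set ?S), vmon h (comp h (root h)))"
    by (simp add: phiAT_gr_def)
  have "(\<Sum>C\<in>?S. \<Sum>v\<in>C. bas (phiAT_gr (attach g h v))) = (\<Sum>C\<in>?S. \<Sum>v\<in>C.
      bas (Y + add_mset (k + vmon_grafted h C v) (image_mset (vmon h) (mset_set (?S - {C}))),
        vmon h (comp h (root h))) :: ('c, 'k) am)"
  proof (intro sum.cong refl)
    fix C v assume C: "C \<in> ?S" and "v \<in> C"
    then have "v < nv h" and "comp h v = C" using comps_subset comp_eq_if_mem_comps by blast+
    then show "bas (phiAT_gr (attach g h v)) = bas (Y + add_mset (k + vmon_grafted h C v)
        (image_mset (vmon h) (mset_set (?S - {C}))), vmon h (comp h (root h)))"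
      using phiAT_gr_attach_other_comp[OF atree_g atree_h] C phi_g phi_h by auto
  qed
  also have "\<dots> = symam (symmul (bas Y) (tri_ms k (image_mset (vmon h) (mset_set ?S))))
      (bas ({#}, vmon h (comp h (root h))))"
  proof -
    have "C \<in> ?S \<Longrightarrow> finite C" for C using finite_comps_elem by blast
    then have "(tri_ms k (image_mset (vmon h) (mset_set ?S)) :: ('c, 'k) sym) = (\<Sum>C\<in>?S. \<Sum>v\<in>C.
        bas (add_mset (k + vmon_grafted h C v) (image_mset (vmon h) (mset_set (?S - {C})))))"
      by (intro tri_ms_image_mset_vmon) simp_all
    then show ?thesis
      unfolding symmul_def bilin_bas_left symam_def bilin_bas_right by (simp add: lin_sum)
  qed
  finally show ?thesis using phi_g phi_h by simp
qed

lemma sum_phiAT_gr_attach_root_comp: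
  "(\<Sum>v\<in>comp h (root h). bas (phiAT_gr (attach g h v)))
    = (symam (bas (fst (phiAT_gr g) + fst (phiAT_gr h)))
        (lin (\<lambda>\<mu>. bas ({#}, \<mu>)) (tri_mm (snd (phiAT_gr g)) (snd (phiAT_gr h)))) :: ('c, 'k::field) am)"
proof -
  let ?R = "comp h (root h)"
  have "(\<Sum>v\<in>?R. bas (phiAT_gr (attach g h v))) = (\<Sum>v\<in>?R.
      bas (fst (phiAT_gr g) + fst (phiAT_gr h), snd (phiAT_gr g) + vmon_grafted h ?R v) :: ('c, 'k) am)"
  proof (intro sum.cong refl)
    fix v assume "v \<in> ?R"
    then have "v < nv h" and "comp h v = ?R" using comp_subset comp_eq_if_mem by blast+
    then show "bas (phiAT_gr (attach g h v))
        = bas (fst (phiAT_gr g) + fst (phiAT_gr h), snd (phiAT_gr g) + vmon_grafted h ?R v)"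
      using phiAT_gr_attach_root_comp[OF atree_g atree_h] by simp
  qed
  also have "\<dots> = symam (bas (fst (phiAT_gr g) + fst (phiAT_gr h)))
      (lin (\<lambda>\<mu>. bas ({#}, \<mu>)) (tri_mm (snd (phiAT_gr g)) (vmon h ?R)))"
    unfolding tri_mm_vmon[OF finite_comp] symam_def bilin_bas_left by (simp add: lin_sum lin_single)
  finally show ?thesis by (simp add: phiAT_gr_def[of h])
qed

lemma tri_aa_phiAT_gr:
  "(tri_aa (bas (phiAT_gr g)) (bas (phiAT_gr h)) :: ('c, 'k::field) am)
    = (\<Sum>v<nv h. bas (phiAT_gr (attach g h v)))"
proof -
  have R: "comp h (root h) \<in> comps h" using comp_in_comps[OF root_less_nv[OF atree_h]] .
  have "(tri_aa (bas (phiAT_gr g)) (bas (phiAT_gr h)) :: ('c, 'k) am)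
      = (\<Sum>v\<in>comp h (root h). bas (phiAT_gr (attach g h v)))
        + (\<Sum>C\<in>comps h - {comp h (root h)}. \<Sum>v\<in>C. bas (phiAT_gr (attach g h v)))"
    unfolding sum_phiAT_gr_attach_aromas sum_phiAT_gr_attach_root_comp tri_aa_def
    by (simp add: case_prod_beta add.commute)
  also have "\<dots> = (\<Sum>C\<in>comps h. \<Sum>v\<in>C. bas (phiAT_gr (attach g h v)))"
    by (rule sum.remove[OF finite_comps R, symmetric])
  also have "\<dots> = (\<Sum>v<nv h. bas (phiAT_gr (attach g h v)))" by (rule sum_lessThan_comps[symmetric])
  finally show ?thesis .
qed

end

lemma lin_phiA_gr_graft_gr:
  assumes "is_atree g" and "targets_ok h"
  shows "lin (\<lambda>c. bas (phiA_gr (repr c))) (graft_gr g h :: 'c gcls \<Rightarrow>\<^sub>0 'k::field)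
    = tri_as (bas (phiAT_gr g)) (bas (phiA_gr h))"
  unfolding graft_gr_def lin_sum lin_bas tri_as_phiA_gr[OF assms]
  by (intro sum.cong refl) (simp add: phiA_gr_repr_cls targets_ok_attach[OF assms])

lemma lin_phiAT_gr_graft_gr:
  assumes "is_atree g" and "is_atree h"
  shows "lin (\<lambda>c. bas (phiAT_gr (repr c))) (graft_gr g h :: 'c gcls \<Rightarrow>\<^sub>0 'k::field)
    = tri_aa (bas (phiAT_gr g)) (bas (phiAT_gr h))"
  unfolding graft_gr_def lin_sum lin_bas tri_aa_phiAT_gr[OF assms]
  by (intro sum.cong refl) (simp add: phiAT_gr_repr_cls is_atree_attach[OF assms])

lemma PhiA_unitA: "PhiA (unitA :: 'c gcls \<Rightarrow>\<^sub>0 'k::field) = unitS"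
proof -
  have "phiA_gr (repr (cls (empty_gr :: 'c gr))) = phiA_gr (empty_gr :: 'c gr)"
    by (rule phiA_gr_repr_cls) (simp add: targets_ok_def empty_gr_def)
  also have "\<dots> = {#}" by (simp add: phiA_gr_def comps_def empty_gr_def)
  finally show ?thesis by (simp add: PhiA_def unitA_def unitS_def)
qed

lemma PhiA_amul:
  assumes "Poly_Mapping.keys a \<subseteq> Acls" and "Poly_Mapping.keys b \<subseteq> Acls"
  shows "PhiA (amul a b) = symmul (PhiA a) (PhiA b)"
  unfolding PhiA_def amul_def symmul_def
proof (rule lin_bilin_eq_bilin_lin)
  fix c d assume "c \<in> Poly_Mapping.keys a" and "d \<in> Poly_Mapping.keys b"
  then have "targets_ok (repr c)" and "targets_ok (repr d)"
    using assms by (auto simp: Acls_def is_multiaroma_targets_ok)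
  then show "lin (\<lambda>c. bas (phiA_gr (repr c))) (bas (cls (du (repr c) (repr d))))
      = bilin (\<lambda>A B. bas (A + B)) (bas (phiA_gr (repr c))) (bas (phiA_gr (repr d)))"
    by (simp add: phiA_gr_repr_cls targets_ok_du phiA_gr_du)
qed

lemma PhiAT_amul:
  assumes "Poly_Mapping.keys a \<subseteq> Acls" and "Poly_Mapping.keys X \<subseteq> ATcls"
  shows "PhiAT (amul a X) = symam (PhiA a) (PhiAT X)"
  unfolding PhiA_def PhiAT_def amul_def symam_def
proof (rule lin_bilin_eq_bilin_lin)
  fix c d assume "c \<in> Poly_Mapping.keys a" and "d \<in> Poly_Mapping.keys X"
  then have "is_multiaroma (repr c)" and "is_atree (repr d)"
    using assms by (auto simp: Acls_def ATcls_def)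
  then show "lin (\<lambda>c. bas (phiAT_gr (repr c))) (bas (cls (du (repr c) (repr d))))
      = bilin (\<lambda>A (B, k). bas (A + B, k)) (bas (phiA_gr (repr c))) (bas (phiAT_gr (repr d)))"
    by (simp add: phiAT_gr_repr_cls is_atree_du phiAT_gr_du case_prod_beta)
qed

lemma PhiAT_graft:
  assumes "Poly_Mapping.keys X \<subseteq> ATcls" and "Poly_Mapping.keys Y \<subseteq> ATcls"
  shows "PhiAT (graft X Y) = tri_aa (PhiAT X) (PhiAT Y)"
  unfolding PhiAT_def graft_def tri_aa_def
proof (rule lin_bilin_eq_bilin_lin, fold tri_aa_def)
  fix c d assume "c \<in> Poly_Mapping.keys X" and "d \<in> Poly_Mapping.keys Y"
  then have "is_atree (repr c)" and "is_atree (repr d)" using assms by (auto simp: ATcls_def)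
  then show "lin (\<lambda>c. bas (phiAT_gr (repr c))) (graft_gr (repr c) (repr d))
      = tri_aa (bas (phiAT_gr (repr c))) (bas (phiAT_gr (repr d)))"
    by (rule lin_phiAT_gr_graft_gr)
qed

lemma PhiA_anchor:
  assumes "Poly_Mapping.keys X \<subseteq> ATcls" and "Poly_Mapping.keys a \<subseteq> Acls"
  shows "PhiA (anchor X a) = tri_as (PhiAT X) (PhiA a)"
  unfolding PhiA_def PhiAT_def anchor_def tri_as_def
proof (rule lin_bilin_eq_bilin_lin, fold tri_as_def)
  fix c d assume "c \<in> Poly_Mapping.keys X" and "d \<in> Poly_Mapping.keys a"
  then have "is_atree (repr c)" and "targets_ok (repr d)"
    using assms by (auto simp: ATcls_def Acls_def is_multiaroma_targets_ok)
  then show "lin (\<lambda>c. bas (phiA_gr (repr c))) (graft_gr (repr c) (repr d))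
      = tri_as (bas (phiAT_gr (repr c))) (bas (phiA_gr (repr d)))"
    by (rule lin_phiA_gr_graft_gr)
qed

theorem theorem3p6:
  fixes X Y a b :: "('c::finite) gcls \<Rightarrow>\<^sub>0 'k::field" and s :: 'k
  assumes "Poly_Mapping.keys X \<subseteq> ATcls" and "Poly_Mapping.keys Y \<subseteq> ATcls"
    and "Poly_Mapping.keys a \<subseteq> Acls" and "Poly_Mapping.keys b \<subseteq> Acls"
  shows "PhiA (unitA :: 'c gcls \<Rightarrow>\<^sub>0 'k) = unitS
    \<and> PhiA (a + b) = PhiA a + PhiA b
    \<and> PhiA (smul s a) = smul s (PhiA a)
    \<and> PhiA (amul a b) = symmul (PhiA a) (PhiA b)
    \<and> PhiAT (graft X Y) = tri_aa (PhiAT X) (PhiAT Y)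
    \<and> PhiAT (amul a X) = symam (PhiA a) (PhiAT X)
    \<and> PhiA (anchor X a) = tri_as (PhiAT X) (PhiA a)"
  using PhiA_unitA PhiA_amul[OF assms(3,4)] PhiAT_graft[OF assms(1,2)] PhiAT_amul[OF assms(3,1)]
    PhiA_anchor[OF assms(1,3)]
  by (simp add: PhiA_def lin_add lin_smul)

end
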